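(* Let $\mathbb{X}$ be a linearly ordered radicable idempotent semifield, $n\ge1$, $\bm{A},\bm{B}\in\mathbb{X}^{n\times n}$ with $\lambda=\bigoplus_{k=1}^{n}(\mathrm{tr}\,\bm{A}^{k})^{1/k}$ the spectral radius of $\bm{A}$ and $\mathrm{Tr}(\bm{B})\le\mathbb{1}$, $\bm{p}\in\mathbb{X}^n$, $\bm{q}\in\mathbb{X}^n$ a regular vector, and $r\in\mathbb{X}$ with $\lambda\oplus(\bm{q}^{-}\bm{p})^{1/2}\oplus r>\mathbb{0}$. Consider minimizing $\bm{x}^{-}\bm{A}\bm{x}\oplus\bm{x}^{-}\bm{p}\oplus\bm{q}^{-}\bm{x}\oplus r$ over regular $\bm{x}\in\mathbb{X}^n$ subject to $\bm{B}\bm{x}\le\bm{x}$. Then the minimum value is $$\theta=\bigoplus_{k=1}^{n}(\mathrm{tr}\,\bm{S}_{k})^{1/k}\oplus\bigoplus_{k=0}^{n-1}(\bm{q}^{-}\bm{T}_{k}\bm{p})^{1/(k+2)}\oplus r,$$ and all regular solutions are exactly the vectors $\bm{x}=(\theta^{-1}\bm{A}\oplus\bm{B})^{\ast}\bm{u}$, where $\bm{u}$ is any vector with $\theta^{-1}\bm{p}\le\bm{u}\le\theta\big(\bm{q}^{-}(\theta^{-1}\bm{A}\oplus\bm{B})^{\ast}\big)^{-}$.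
   Context: An idempotent semifield is $(\mathbb{X},\oplus,\otimes,\mathbb{0},\mathbb{1})$ where $(\mathbb{X},\oplus,\mathbb{0})$ is a commutative monoid with idempotent addition, $(\mathbb{X}\setminus\{\mathbb{0}\},\otimes,\mathbb{1})$ is an abelian group, and $\otimes$ distributes over $\oplus$; the product sign is omitted. The order is $x\le y$ iff $x\oplus y=y$, assumed linear; "minimum" refers to this order. Radicable means $x^m=a$ is solvable for all $a$ and integers $m\ge1$, so rational powers are defined. Matrix/vector operations use $\oplus,\otimes$; inequalities are entrywise. $\bm{I}$ is the identity matrix, $\bm{A}^0=\bm{I}$. A vector is regular if all entries are nonzero. For a nonzero vector $\bm{x}$ (row or column), $\bm{x}^{-}$ is the transposed vector with entries $x_i^{-1}$ if $x_i\ne\mathbb{0}$ and $\mathbb{0}$ otherwise. $\mathrm{tr}\,\bm{A}=a_{11}\oplus\cdots\oplus a_{nn}$; $\mathrm{Tr}(\bm{A})=\mathrm{tr}\,\bm{A}\oplus\cdots\oplus\mathrm{tr}\,\bm{A}^{n}$; $\bm{A}^{\ast}=\bm{I}\oplus\bm{A}\oplus\cdots\oplus\bm{A}^{n-1}$. For $k=1,\dots,n$, $\bm{S}_k=\bigoplus_{0\le i_1+\cdots+i_k\le n-k}\bm{A}\bm{B}^{i_1}\cdots\bm{A}\bm{B}^{i_k}$ (over nonnegative integers $i_j$); $\bm{T}_0=\bm{B}^{\ast}$ and, for $k=1,\dots,n-1$, $\bm{T}_k=\bigoplus_{0\le i_0+i_1+\cdots+i_k\le n-k-1}\bm{B}^{i_0}\bm{A}\bm{B}^{i_1}\cdots\bm{A}\bm{B}^{i_k}$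 (over nonnegative integers $i_j$). *)

theory Defs
  imports "HOL-Analysis.Finite_Cartesian_Product"
begin

text \<open>Addition (+) plays the role of the idempotent addition, times of the
multiplication; 0 and 1 are the zero and the unit.\<close>

class lin_rad_idem_semifield = comm_semiring_1 + linorder + inverse +
  assumes add_idem: "x + x = x"
    and le_iff_add: "x \<le> y \<longleftrightarrow> x + y = y"
    and right_inverse_nz: "x \<noteq> 0 \<Longrightarrow> x * inverse x = 1"
    and inverse_zero_sf: "inverse 0 = 0"
    and radicable: "0 < m \<Longrightarrow> \<exists>y. y ^ m = a"

text \<open>The m-th root a^(1/m) (unique in a linearly ordered radicable idempotent semifield).\<close>
definition iroot :: "nat \<Rightarrow> 'a::lin_rad_idem_semifield \<Rightarrow> 'a" where
  "iroot m a = (THE y. y ^ m = a)"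

definition regular :: "'a::zero ^ 'n \<Rightarrow> bool" where
  "regular x \<longleftrightarrow> (\<forall>i. x $ i \<noteq> 0)"

text \<open>x^- : entrywise inverse (transposition is implicit, rows and columns are
both represented as 'a^'n); inverse 0 = 0 gives the zero-entry convention.\<close>
definition vinv :: "'a::lin_rad_idem_semifield ^ 'n \<Rightarrow> 'a ^ 'n" where
  "vinv x = (\<chi> i. inverse (x $ i))"

definition vdot :: "'a::lin_rad_idem_semifield ^ 'n::finite \<Rightarrow> 'a ^ 'n \<Rightarrow> 'a" where
  "vdot u v = (\<Sum>i\<in>UNIV. u $ i * v $ i)"

definition smat :: "'a::lin_rad_idem_semifield \<Rightarrow> 'a ^ 'n ^ 'm \<Rightarrow> 'a ^ 'n ^ 'm" where
  "smat c A = (\<chi> i j. c * A $ i $ j)"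

primrec mpow :: "'a::lin_rad_idem_semifield ^ 'n::finite ^ 'n \<Rightarrow> nat \<Rightarrow> 'a ^ 'n ^ 'n" where
  "mpow A 0 = mat 1"
| "mpow A (Suc k) = A ** mpow A k"

primrec mprod :: "('a::lin_rad_idem_semifield ^ 'n::finite ^ 'n) list \<Rightarrow> 'a ^ 'n ^ 'n" where
  "mprod [] = mat 1"
| "mprod (M # Ms) = M ** mprod Ms"

definition tr :: "'a::lin_rad_idem_semifield ^ 'n::finite ^ 'n \<Rightarrow> 'a" where
  "tr A = (\<Sum>i\<in>UNIV. A $ i $ i)"

definition Trc :: "'a::lin_rad_idem_semifield ^ 'n::finite ^ 'n \<Rightarrow> 'a" where
  "Trc A = (\<Sum>k\<in>{1..CARD('n)}. tr (mpow A k))"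

definition kstar :: "'a::lin_rad_idem_semifield ^ 'n::finite ^ 'n \<Rightarrow> 'a ^ 'n ^ 'n" where
  "kstar A = (\<Sum>k\<in>{0..<CARD('n)}. mpow A k)"

definition Smat :: "'a::lin_rad_idem_semifield ^ 'n::finite ^ 'n \<Rightarrow> 'a ^ 'n ^ 'n \<Rightarrow> nat \<Rightarrow> 'a ^ 'n ^ 'n" where
  "Smat A B k = (\<Sum>is\<in>{is. length is = k \<and> sum_list is \<le> CARD('n) - k}.
                   mprod (map (\<lambda>i. A ** mpow B i) is))"

definition Tmat :: "'a::lin_rad_idem_semifield ^ 'n::finite ^ 'n \<Rightarrow> 'a ^ 'n ^ 'n \<Rightarrow> nat \<Rightarrow> 'a ^ 'n ^ 'n" where
  "Tmat A B k = (if k = 0 then kstar B else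
     (\<Sum>(i0, is)\<in>{(i0, is). length is = k \<and> i0 + sum_list is \<le> CARD('n) - k - 1}.
        mpow B i0 ** mprod (map (\<lambda>i. A ** mpow B i) is)))"

end

theory Submission
  imports Defs
begin

text \<open>For \<open>\<mu> \<noteq> 0\<close> and regular \<open>x\<close>, the conditions \<open>B x \<le> x\<close> and \<open>F x \<le> \<mu>\<close>
  amount to the system \<open>(\<mu>\<^sup>-\<^sup>1 A \<oplus> B) x \<le> x\<close>, \<open>\<mu>\<^sup>-\<^sup>1 p \<le> x\<close>,
  \<open>q\<^sup>- x \<le> \<mu>\<close>, \<open>r \<le> \<mu>\<close>. A regular solution of the first inequality forces
  \<open>Tr(\<mu>\<^sup>-\<^sup>1 A \<oplus> B) \<le> 1\<close>; under this condition the solutions of the first inequality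
  are the vectors \<open>(\<mu>\<^sup>-\<^sup>1 A \<oplus> B)\<^sup>* u\<close>, and the whole system is solvable iff moreover
  \<open>q\<^sup>- (\<mu>\<^sup>-\<^sup>1 A \<oplus> B)\<^sup>* p \<le> \<mu>\<^sup>2\<close>, the solutions being those \<open>u\<close> in the box of
  the statement. Expanding the powers of \<open>\<mu>\<^sup>-\<^sup>1 A \<oplus> B\<close> into words in \<open>A\<close> and \<open>B\<close>
  and grouping them by the number \<open>k\<close> of letters \<open>A\<close> turns the two conditions into
  \<open>tr S\<^sub>k \<le> \<mu>\<^sup>k\<close> and \<open>q\<^sup>- T\<^sub>k p \<le> \<mu>\<^sup>k\<^sup>+\<^sup>2\<close>, that is, into \<open>\<theta> \<le> \<mu>\<close>.
  Hence \<open>\<theta>\<close> is the least value of \<open>F\<close> on the feasible set, and the minimizers form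
  the sublevel set at \<open>\<theta>\<close>.\<close>

class idem_ordered_monoid_add = canonically_ordered_monoid_add +
  assumes add_le_iff [simp]: "x + y \<le> z \<longleftrightarrow> x \<le> z \<and> y \<le> z"
begin

lemma add_ge1: "x \<le> x + y"
  using add_le_iff[of x y "x + y"] by simp

lemma add_ge2: "y \<le> x + y"
  using add_le_iff[of x y "x + y"] by simp

lemma sum_le_iff: "finite S \<Longrightarrow> sum f S \<le> z \<longleftrightarrow> (\<forall>s\<in>S. f s \<le> z)"
  by (induction S rule: finite_induct) auto

lemma sum_ge_member: "finite S \<Longrightarrow> s \<in> S \<Longrightarrow> f s \<le> sum f S"
  using sum_le_iff[of S f "sum f S"] by blast

end

instance vec :: (idem_ordered_monoid_add, finite) idem_ordered_monoid_add
proof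
  fix x y z :: "'a ^ 'b"
  show "x \<le> y \<longleftrightarrow> (\<exists>c. y = x + c)"
  proof
    assume "x \<le> y"
    then have "y = x + y"
      by (auto simp: less_eq_vec_def vec_eq_iff intro: order.antisym add_ge2)
    then show "\<exists>c. y = x + c" ..
  qed (auto simp: less_eq_vec_def add_ge1)
  show "x + y \<le> z \<longleftrightarrow> x \<le> z \<and> y \<le> z"
    by (auto simp: less_eq_vec_def)
qed

context lin_rad_idem_semifield
begin

lemma add_eq_max: "x + y = max x y"
  by (metis add.commute le_iff_add max.absorb_iff2 max.commute max_def)

subclass idem_ordered_monoid_add
proof
  fix a b c :: 'a
  show "a \<le> b \<longleftrightarrow> (\<exists>d. b = a + d)"
  proof
    assume "a \<le> b"
    then have "b = a + b"
      by (simp add: le_iff_add)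
    then show "\<exists>d. b = a + d" ..
  next
    assume "\<exists>d. b = a + d"
    then obtain d where "b = a + d" ..
    then have "a + b = (a + a) + d"
      by (simp add: add.assoc)
    then show "a \<le> b"
      by (simp add: le_iff_add add_idem \<open>b = a + d\<close>)
  qed
  show "a + b \<le> c \<longleftrightarrow> a \<le> c \<and> b \<le> c"
    by (simp add: add_eq_max)
qed

subclass ordered_comm_semiring
proof
  fix a b c :: 'a
  assume "a \<le> b"
  then obtain d where "b = a + d"
    by (rule less_eqE)
  then show "c * a \<le> c * b"
    by (simp add: distrib_left add_ge1)
qed

subclass ordered_semiring_1
  by standard (simp add: order.strict_iff_order)

lemma left_inverse_nz: "x \<noteq> 0 \<Longrightarrow> inverse x * x = 1"
  using right_inverse_nz by (simp add: mult.commute)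

subclass semiring_1_no_zero_divisors
proof
  fix a b :: 'a
  assume "a \<noteq> 0" "b \<noteq> 0"
  show "a * b \<noteq> 0"
  proof
    assume "a * b = 0"
    have "b = inverse a * (a * b)"
      using \<open>a \<noteq> 0\<close> by (simp add: mult.assoc[symmetric] left_inverse_nz)
    also have "\<dots> = 0"
      using \<open>a * b = 0\<close> by simp
    finally show False
      using \<open>b \<noteq> 0\<close> by simp
  qed
qed

lemma sum_attained: "finite S \<Longrightarrow> S \<noteq> {} \<Longrightarrow> \<exists>s\<in>S. sum f S = f s"
proof (induction S rule: finite_induct)
  case (insert x F)
  show ?case
  proof (cases "F = {}")
    case False
    then obtain s where "s \<in> F" "sum f F = f s"
      using insert by auto
    then show ?thesis
      using insert by (auto simp: add_eq_max max_def)
  qed simp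
qed simp

lemma inverse_nonzero_sf: "x \<noteq> 0 \<Longrightarrow> inverse x \<noteq> 0"
  by (metis mult_zero_right right_inverse_nz zero_neq_one)

lemma inverse_unique_sf: "a * b = 1 \<Longrightarrow> inverse a = b"
proof -
  assume ab: "a * b = 1"
  then have "a \<noteq> 0"
    by auto
  then have "inverse a = inverse a * (a * b)"
    using ab by simp
  also have "\<dots> = b"
    using \<open>a \<noteq> 0\<close> by (simp add: mult.assoc[symmetric] left_inverse_nz)
  finally show ?thesis .
qed

lemma inverse_inverse_sf: "inverse (inverse x) = x"
  by (cases "x = 0") (simp_all add: inverse_zero_sf inverse_unique_sf left_inverse_nz)

lemma inverse_power_sf: "x \<noteq> 0 \<Longrightarrow> inverse (x ^ k) = inverse x ^ k"
  by (rule inverse_unique_sf) (simp add: power_mult_distrib[symmetric] right_inverse_nz)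

lemma mult_le_cancel_right_nz: "c \<noteq> 0 \<Longrightarrow> a * c \<le> b * c \<longleftrightarrow> a \<le> b"
proof
  assume "c \<noteq> 0" "a * c \<le> b * c"
  then have "a * c * inverse c \<le> b * c * inverse c"
    by (simp add: mult_right_mono)
  with \<open>c \<noteq> 0\<close> show "a \<le> b"
    by (simp add: mult.assoc right_inverse_nz)
qed (simp add: mult_right_mono)

lemma inverse_mult_le_iff:
  assumes "c \<noteq> 0"
  shows "inverse c * a \<le> b \<longleftrightarrow> a \<le> c * b"
proof -
  have "inverse c * a * c = a * (inverse c * c)"
    by (simp add: mult_ac)
  also have "\<dots> = a"
    using assms by (simp add: left_inverse_nz)
  finally show ?thesis
    using mult_le_cancel_right_nz[OF assms, of "inverse c * a" b] by (simp add: mult.commute)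
qed

lemma mult_strict_right_mono_nz: "a < b \<Longrightarrow> c \<noteq> 0 \<Longrightarrow> a * c < b * c"
  by (simp add: less_le_not_le mult_le_cancel_right_nz)

lemma power_strict_mono_sf:
  assumes "y < x" and "0 < k"
  shows "y ^ k < x ^ k"
proof -
  obtain m where k: "k = Suc m"
    using \<open>0 < k\<close> gr0_implies_Suc by blast
  have "x \<noteq> 0"
    using \<open>y < x\<close> by auto
  have "y ^ k = y * y ^ m"
    by (simp add: k)
  also have "\<dots> \<le> y * x ^ m"
    using \<open>y < x\<close> by (simp add: mult_left_mono power_mono)
  also have "\<dots> < x * x ^ m"
    using \<open>y < x\<close> \<open>x \<noteq> 0\<close> by (simp add: mult_strict_right_mono_nz)
  finally show ?thesis
    by (simp add: k)
qed

lemma power_le_power_iff_sf: "0 < k \<Longrightarrow> x ^ k \<le> y ^ k \<longleftrightarrow> x \<le> y"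
  using power_strict_mono_sf[of y x k] by (auto simp: power_mono not_le[symmetric])

end

lemma iroot_power:
  fixes a :: "'a::lin_rad_idem_semifield"
  assumes "0 < k"
  shows "iroot k a ^ k = a"
proof -
  obtain y where y: "y ^ k = a"
    using radicable[OF assms] ..
  have "(THE y. y ^ k = a) = y"
  proof (rule the_equality)
    fix z
    assume "z ^ k = a"
    then show "z = y"
      using y power_le_power_iff_sf[OF assms] by (metis order.antisym order.refl)
  qed (fact y)
  with y show ?thesis
    by (simp add: iroot_def)
qed

lemma iroot_le_iff:
  fixes a :: "'a::lin_rad_idem_semifield"
  shows "0 < k \<Longrightarrow> iroot k a \<le> m \<longleftrightarrow> a \<le> m ^ k"
  using power_le_power_iff_sf[of k "iroot k a" m] by (simp add: iroot_power)

lemma iroot_0: "0 < k \<Longrightarrow> iroot k (0::'a::lin_rad_idem_semifield) = 0"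
  using iroot_le_iff[of k 0 0] by simp

lemma iroot_mono:
  fixes a :: "'a::lin_rad_idem_semifield"
  shows "0 < k \<Longrightarrow> a \<le> b \<Longrightarrow> iroot k a \<le> iroot k b"
  by (simp add: iroot_le_iff iroot_power)

lemma mat_le_iff: "X \<le> Y \<longleftrightarrow> (\<forall>i j. X$i$j \<le> Y$i$j)"
  for X Y :: "'a::ord^'n::finite^'m::finite"
  by (simp add: less_eq_vec_def)

lemma matrix_mult_mono:
  fixes X X' :: "'a::{semiring_1, ordered_semiring, canonically_ordered_monoid_add}^'n::finite^'m::finite"
    and Y Y' :: "'a^'p::finite^'n"
  shows "X \<le> X' \<Longrightarrow> Y \<le> Y' \<Longrightarrow> X ** Y \<le> X' ** Y'"
  unfolding matrix_matrix_mult_def less_eq_vec_def by (auto intro!: sum_mono mult_mono)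

lemma matrix_vector_mult_mono:
  fixes X X' :: "'a::{semiring_1, ordered_semiring, canonically_ordered_monoid_add}^'n::finite^'m::finite"
  shows "X \<le> X' \<Longrightarrow> x \<le> x' \<Longrightarrow> X *v x \<le> X' *v x'"
  unfolding matrix_vector_mult_def less_eq_vec_def by (auto intro!: sum_mono mult_mono)

lemma matrix_add_rdistrib: "(B + C) ** A = B ** A + C ** A"
  for A :: "'a::semiring_1^'p::finite^'n::finite"
  by (vector matrix_matrix_mult_def sum.distrib[symmetric] distrib_right)

lemma matrix_mult_sum_right: "finite S \<Longrightarrow> X ** sum f S = (\<Sum>s\<in>S. X ** f s)"
  for X :: "'a::semiring_1^'n::finite^'m::finite"
  by (induction S rule: finite_induct) (simp_all add: matrix_add_ldistrib)

lemma sum_matrix_vector_mult: "finite S \<Longrightarrow> sum f S *v x = (\<Sum>s\<in>S. f s *v x)"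
  for x :: "'a::semiring_1^'n::finite"
  by (induction S rule: finite_induct) (simp_all add: matrix_vector_mult_add_rdistrib)

lemma matrix_vector_mult_ge:
  fixes C :: "'a::{semiring_1, ordered_semiring, canonically_ordered_monoid_add}^'n::finite^'n"
  shows "mat 1 \<le> C \<Longrightarrow> u \<le> C *v u"
  using matrix_vector_mult_mono[of "mat 1" C u u] by simp

lemma mat_one_le_diag:
  fixes C :: "'a::{zero, one, order}^'n::finite^'n"
  assumes "mat 1 \<le> C"
  shows "1 \<le> C$j$j"
proof -
  have "(mat 1 :: 'a^'n^'n)$j$j \<le> C$j$j"
    using assms by (simp add: mat_le_iff)
  then show ?thesis
    by (simp add: mat_def)
qed

lemma matrix_vector_mult_smult:
  "C *v (c *s y) = c *s (C *v y)" for y :: "'a::comm_semiring_1^'n::finite"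
  by (simp add: matrix_vector_mult_def vector_scalar_mult_def vec_eq_iff sum_distrib_left mult_ac)

lemma mpow_mono: "X \<le> Y \<Longrightarrow> mpow X k \<le> mpow Y k"
  by (induction k) (simp_all add: matrix_mult_mono)

lemma mpow_add: "mpow X (a + b) = mpow X a ** mpow X b"
  by (induction a) (simp_all add: matrix_mul_assoc)

lemma mprod_append: "mprod (xs @ ys) = mprod xs ** mprod ys"
  by (induction xs) (simp_all add: matrix_mul_assoc)

lemma smat_matrix_mult_left: "smat c X ** Y = smat c (X ** Y)"
  by (simp add: smat_def matrix_matrix_mult_def vec_eq_iff sum_distrib_left mult_ac)

lemma smat_matrix_mult_right: "X ** smat c Y = smat c (X ** Y)"
  by (simp add: smat_def matrix_matrix_mult_def vec_eq_iff sum_distrib_left mult_ac)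

lemma smat_smat: "smat c (smat d X) = smat (c * d) X"
  by (simp add: smat_def vec_eq_iff mult_ac)

lemma smat_1: "smat 1 X = X"
  by (simp add: smat_def vec_eq_iff)

lemma smat_matrix_vector_mult: "smat c X *v x = c *s (X *v x)"
  by (simp add: smat_def matrix_vector_mult_def vector_scalar_mult_def vec_eq_iff
      sum_distrib_left mult_ac)

lemma tr_matrix_mult_commute: "tr (X ** Y) = tr (Y ** X)"
  unfolding tr_def matrix_matrix_mult_def by (simp add: mult.commute) (rule sum.swap)

lemma diag_le_tr: "X$i$i \<le> tr X"
  unfolding tr_def by (rule sum_ge_member) simp_all

lemma tr_mpow_le_Trc:
  "1 \<le> k \<Longrightarrow> k \<le> CARD('n) \<Longrightarrow> tr (mpow (M::'a::lin_rad_idem_semifield^'n::finite^'n) k) \<le> Trc M"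
  unfolding Trc_def by (rule sum_ge_member) simp_all

text \<open>Traces and the numbers \<open>q\<^sup>- X p\<close> are both linear forms in the entries of \<open>X\<close>,
  so the bounds on them are proved once for linear forms.\<close>

definition linear_form :: "('n \<Rightarrow> 'n \<Rightarrow> 'a) \<Rightarrow> 'a::lin_rad_idem_semifield^'n::finite^'n \<Rightarrow> 'a" where
  "linear_form w X = (\<Sum>i\<in>UNIV. \<Sum>j\<in>UNIV. w i j * X$i$j)"

lemma linear_form_sum: "finite S \<Longrightarrow> linear_form w (sum f S) = (\<Sum>s\<in>S. linear_form w (f s))"
  by (induction S rule: finite_induct)
    (simp_all add: linear_form_def distrib_left sum.distrib)

lemma linear_form_mono: "X \<le> Y \<Longrightarrow> linear_form w X \<le> linear_form w Y"
  unfolding linear_form_def mat_le_iff by (auto intro!: sum_mono mult_left_mono)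

lemma linear_form_smat: "linear_form w (smat c X) = c * linear_form w X"
  by (simp add: linear_form_def smat_def sum_distrib_left mult_ac)

lemma tr_eq_linear_form: "tr X = linear_form (\<lambda>i j. if i = j then 1 else 0) X"
  by (simp add: linear_form_def tr_def if_distrib if_distribR cong: if_cong)

lemma vdot_matrix_vector_mult_eq_linear_form:
  "vdot (vinv q) (X *v p) = linear_form (\<lambda>i j. inverse (q$i) * p$j) X"
  by (simp add: linear_form_def vdot_def vinv_def matrix_vector_mult_def sum_distrib_left mult_ac)

lemma tr_mono: "X \<le> Y \<Longrightarrow> tr X \<le> tr Y"
  unfolding tr_eq_linear_form by (rule linear_form_mono)

lemma tr_sum: "finite S \<Longrightarrow> tr (sum f S) = (\<Sum>s\<in>S. tr (f s))"
  unfolding tr_eq_linear_form by (rule linear_form_sum)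

section \<open>Walks and the Kleene star\<close>

fun walk_weight :: "'a::lin_rad_idem_semifield^'n::finite^'n \<Rightarrow> 'n list \<Rightarrow> 'a" where
  "walk_weight M [] = 1"
| "walk_weight M [v] = 1"
| "walk_weight M (u # v # vs) = M$u$v * walk_weight M (v # vs)"

lemma walk_weight_Cons: "vs \<noteq> [] \<Longrightarrow> walk_weight M (u # vs) = M$u$(hd vs) * walk_weight M vs"
  by (cases vs) simp_all

lemma walk_weight_append:
  "walk_weight M (xs @ [y] @ ys) = walk_weight M (xs @ [y]) * walk_weight M (y # ys)"
proof (induction xs)
  case (Cons a xs)
  then show ?case
    by (cases xs) (simp_all add: mult.assoc)
qed simp

lemma walk_weight_le_mpow:
  "vs \<noteq> [] \<Longrightarrow> walk_weight M vs \<le> mpow M (length vs - 1) $ hd vs $ last vs"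
proof (induction vs)
  case (Cons u vs)
  show ?case
  proof (cases "vs = []")
    case True
    then show ?thesis
      by (simp add: mat_def)
  next
    case False
    then have "walk_weight M (u # vs) \<le> M$u$(hd vs) * mpow M (length vs - 1) $ hd vs $ last vs"
      using Cons.IH by (simp add: walk_weight_Cons mult_left_mono)
    also have "\<dots> \<le> (\<Sum>k\<in>UNIV. M$u$k * mpow M (length vs - 1) $ k $ last vs)"
      by (rule sum_ge_member) simp_all
    also have "\<dots> = mpow M (Suc (length vs - 1)) $ u $ last vs"
      by (simp add: matrix_matrix_mult_def)
    finally show ?thesis
      using False by simp
  qed
qed simp

lemma mpow_entry_eq_walk_weight:
  "mpow M m $ i $ j = 0 \<or>
     (\<exists>vs. length vs = Suc m \<and> hd vs = i \<and> last vs = j \<and> mpow M m $ i $ j = walk_weight M vs)"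
proof (induction m arbitrary: i)
  case 0
  show ?case
    by (cases "i = j") (auto simp: mat_def intro!: exI[of _ "[i]"])
next
  case (Suc m)
  obtain k where k: "(\<Sum>k\<in>UNIV. M$i$k * mpow M m $ k $ j) = M$i$k * mpow M m $ k $ j"
    using sum_attained[of UNIV "\<lambda>k. M$i$k * mpow M m $ k $ j"] by auto
  then have Mij: "mpow M (Suc m) $ i $ j = M$i$k * mpow M m $ k $ j"
    by (simp add: matrix_matrix_mult_def)
  from Suc.IH[of k] show ?case
  proof
    assume "\<exists>vs. length vs = Suc m \<and> hd vs = k \<and> last vs = j \<and> mpow M m $ k $ j = walk_weight M vs"
    then obtain vs where vs: "length vs = Suc m" "hd vs = k" "last vs = j"
      "mpow M m $ k $ j = walk_weight M vs"
      by blast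
    then have "vs \<noteq> []"
      by auto
    with vs Mij show ?thesis
      by (intro disjI2 exI[of _ "i # vs"]) (simp add: walk_weight_Cons)
  qed (use Mij in simp)
qed

lemma walk_weight_remove_cycle:
  "walk_weight M (xs @ [y] @ ys @ [y] @ zs) = walk_weight M (xs @ [y] @ zs) * walk_weight M (y # ys @ [y])"
proof -
  have "walk_weight M (xs @ [y] @ ys @ [y] @ zs)
      = walk_weight M (xs @ [y]) * (walk_weight M (y # ys @ [y]) * walk_weight M (y # zs))"
    using walk_weight_append[of M xs y "ys @ [y] @ zs"] walk_weight_append[of M "y # ys" y zs]
    by simp
  also have "\<dots> = walk_weight M (xs @ [y] @ zs) * walk_weight M (y # ys @ [y])"
    using walk_weight_append[of M xs y zs] by (simp add: mult_ac)
  finally show ?thesis .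
qed

lemma length_le_card_if_distinct: "distinct (vs :: 'n::finite list) \<Longrightarrow> length vs \<le> CARD('n)"
  using card_mono[of UNIV "set vs"] distinct_card[of vs] by simp

lemma mpow_le_kstar_less: "k < CARD('n) \<Longrightarrow> mpow (M::'a::lin_rad_idem_semifield^'n::finite^'n) k \<le> kstar M"
  unfolding kstar_def by (rule sum_ge_member) simp_all

text \<open>A closed walk with a repeated inner vertex splits into two shorter closed walks, and
  one without repetitions has at most \<open>n\<close> edges, so its weight is bounded by
  \<open>tr M\<^sup>k \<le> Tr(M)\<close> for some \<open>k \<le> n\<close>.\<close>

lemma closed_walk_weight_le_one:
  fixes M :: "'a::lin_rad_idem_semifield^'n::finite^'n"
  assumes "Trc M \<le> 1"
  shows "2 \<le> length vs \<Longrightarrow> hd vs = last vs \<Longrightarrow> walk_weight M vs \<le> 1"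
proof (induction "length vs" arbitrary: vs rule: less_induct)
  case less
  obtain ws v where vs: "vs = ws @ [v]"
    using less.prems by (cases vs rule: rev_cases) auto
  show ?case
  proof (cases "distinct ws")
    case True
    then have "1 \<le> length ws" "length ws \<le> CARD('n)"
      using less.prems vs by (simp_all add: length_le_card_if_distinct)
    have "walk_weight M vs \<le> mpow M (length ws) $ v $ v"
      using walk_weight_le_mpow[of vs M] less.prems(2) by (simp add: vs)
    also have "\<dots> \<le> tr (mpow M (length ws))"
      by (rule diag_le_tr)
    also have "\<dots> \<le> Trc M"
      using \<open>1 \<le> length ws\<close> \<open>length ws \<le> CARD('n)\<close> by (rule tr_mpow_le_Trc)
    finally show ?thesis
      using assms by simp
  next
    case False
    then obtain xs ys zs y where ws: "ws = xs @ [y] @ ys @ [y] @ zs"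
      using not_distinct_decomp by blast
    have "hd (xs @ [y] @ zs @ [v]) = last (xs @ [y] @ zs @ [v])"
      using less.prems(2) by (cases xs) (simp_all add: vs ws)
    then have "walk_weight M (xs @ [y] @ zs @ [v]) \<le> 1"
      by (intro less.hyps) (simp_all add: vs ws)
    moreover have "walk_weight M (y # ys @ [y]) \<le> 1"
      by (rule less.hyps) (simp_all add: vs ws)
    ultimately have "walk_weight M (xs @ [y] @ zs @ [v]) * walk_weight M (y # ys @ [y]) \<le> 1 * 1"
      by (intro mult_mono) simp_all
    then show ?thesis
      using walk_weight_remove_cycle[of M xs y ys "zs @ [v]"] by (simp add: vs ws)
  qed
qed

lemma walk_weight_le_kstar:
  fixes M :: "'a::lin_rad_idem_semifield^'n::finite^'n"
  assumes "Trc M \<le> 1"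
  shows "vs \<noteq> [] \<Longrightarrow> walk_weight M vs \<le> kstar M $ hd vs $ last vs"
proof (induction "length vs" arbitrary: vs rule: less_induct)
  case less
  show ?case
  proof (cases "distinct vs")
    case True
    then have "length vs - 1 < CARD('n)"
      using less.prems length_le_card_if_distinct[of vs] by (cases vs) simp_all
    then have "mpow M (length vs - 1) $ hd vs $ last vs \<le> kstar M $ hd vs $ last vs"
      using mpow_le_kstar_less[of "length vs - 1" M] by (simp add: mat_le_iff)
    then show ?thesis
      using walk_weight_le_mpow[OF less.prems] by (rule order_trans[rotated])
  next
    case False
    then obtain xs ys zs y where vs: "vs = xs @ [y] @ ys @ [y] @ zs"
      using not_distinct_decomp by blast
    have "hd (xs @ [y] @ zs) = hd vs"
      by (cases xs) (simp_all add: vs)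
    moreover have "last (xs @ [y] @ zs) = last vs"
      by (cases zs) (simp_all add: vs)
    moreover have "length (xs @ [y] @ zs) < length vs"
      by (simp add: vs)
    ultimately have "walk_weight M (xs @ [y] @ zs) \<le> kstar M $ hd vs $ last vs"
      using less.hyps[of "xs @ [y] @ zs"] by simp
    moreover have "walk_weight M (y # ys @ [y]) \<le> 1"
      using closed_walk_weight_le_one[OF assms] by simp
    ultimately have "walk_weight M (xs @ [y] @ zs) * walk_weight M (y # ys @ [y])
        \<le> kstar M $ hd vs $ last vs * 1"
      by (intro mult_mono) simp_all
    then show ?thesis
      using walk_weight_remove_cycle[of M xs y ys zs] by (simp add: vs)
  qed
qed

lemma mpow_le_kstar:
  fixes M :: "'a::lin_rad_idem_semifield^'n::finite^'n"
  assumes "Trc M \<le> 1"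
  shows "mpow M m \<le> kstar M"
  unfolding mat_le_iff
proof (intro allI)
  fix i j
  from mpow_entry_eq_walk_weight[of M m i j]
  show "mpow M m $ i $ j \<le> kstar M $ i $ j"
  proof
    assume "\<exists>vs. length vs = Suc m \<and> hd vs = i \<and> last vs = j \<and> mpow M m $ i $ j = walk_weight M vs"
    then obtain vs where "length vs = Suc m" "hd vs = i" "last vs = j"
      "mpow M m $ i $ j = walk_weight M vs"
      by blast
    moreover from \<open>length vs = Suc m\<close> have "vs \<noteq> []"
      by auto
    ultimately show ?thesis
      using walk_weight_le_kstar[OF assms, of vs] by simp
  qed simp
qed

lemma kstar_mult_le:
  fixes M :: "'a::lin_rad_idem_semifield^'n::finite^'n"
  assumes "Trc M \<le> 1"
  shows "M ** kstar M \<le> kstar M"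
proof -
  have "M ** kstar M = (\<Sum>k\<in>{0..<CARD('n)}. mpow M (Suc k))"
    unfolding kstar_def by (simp add: matrix_mult_sum_right)
  also have "\<dots> \<le> kstar M"
    using mpow_le_kstar[OF assms] by (simp add: sum_le_iff del: mpow.simps)
  finally show ?thesis .
qed

lemma mat_one_le_kstar: "mat 1 \<le> kstar (M::'a::lin_rad_idem_semifield^'n::finite^'n)"
  using mpow_le_kstar_less[of 0 M] by simp

lemma kstar_mono: "X \<le> Y \<Longrightarrow> kstar X \<le> kstar (Y::'a::lin_rad_idem_semifield^'n::finite^'n)"
  unfolding kstar_def[of X]
  by (auto simp: sum_le_iff intro: order_trans[OF mpow_mono mpow_le_kstar_less])

lemma mpow_matrix_vector_mult_le: "M *v x \<le> x \<Longrightarrow> mpow M k *v x \<le> x"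
proof (induction k)
  case (Suc k)
  have "mpow M (Suc k) *v x = M *v (mpow M k *v x)"
    by (simp add: matrix_vector_mul_assoc)
  also have "\<dots> \<le> M *v x"
    using Suc by (simp add: matrix_vector_mult_mono)
  finally show ?case
    using Suc.prems by simp
qed simp

lemma kstar_matrix_vector_mult_le:
  fixes M :: "'a::lin_rad_idem_semifield^'n::finite^'n"
  assumes "M *v x \<le> x" and "b \<le> x"
  shows "kstar M *v b \<le> x"
proof -
  have "kstar M *v b = (\<Sum>k\<in>{0..<CARD('n)}. mpow M k *v b)"
    unfolding kstar_def by (simp add: sum_matrix_vector_mult)
  also have "\<dots> \<le> x"
  proof -
    have "mpow M k *v b \<le> x" for k
      using matrix_vector_mult_mono[OF order_refl assms(2)] mpow_matrix_vector_mult_le[OF assms(1)]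
      by (rule order_trans)
    then show ?thesis
      by (simp add: sum_le_iff)
  qed
  finally show ?thesis .
qed

lemma kstar_matrix_vector_mult_eq:
  fixes M :: "'a::lin_rad_idem_semifield^'n::finite^'n"
  shows "M *v x \<le> x \<Longrightarrow> kstar M *v x = x"
  using kstar_matrix_vector_mult_le[OF _ order_refl] matrix_vector_mult_ge[OF mat_one_le_kstar]
  by (blast intro: order.antisym)

lemma kstar_subeigenvector:
  fixes M :: "'a::lin_rad_idem_semifield^'n::finite^'n"
  assumes "Trc M \<le> 1"
  shows "M *v (kstar M *v u) \<le> kstar M *v u"
  using kstar_mult_le[OF assms] by (simp add: matrix_vector_mul_assoc matrix_vector_mult_mono)

lemma Trc_le_one_if_regular_subeigenvector:
  fixes M :: "'a::lin_rad_idem_semifield^'n::finite^'n"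
  assumes "regular x" and "M *v x \<le> x"
  shows "Trc M \<le> 1"
proof -
  have "mpow M k $ i $ i \<le> 1" for k i
  proof -
    have "mpow M k $ i $ i * x$i \<le> (mpow M k *v x) $ i"
      unfolding matrix_vector_mult_def by (simp, rule sum_ge_member) simp_all
    also have "\<dots> \<le> x$i"
      using mpow_matrix_vector_mult_le[OF assms(2)] by (simp add: less_eq_vec_def)
    finally show ?thesis
      using mult_le_cancel_right_nz[of "x$i" "mpow M k $ i $ i" 1] assms(1)
      by (simp add: regular_def)
  qed
  then show ?thesis
    by (simp add: Trc_def tr_def sum_le_iff)
qed

section \<open>Words in \<open>A\<close> and \<open>B\<close>\<close>

text \<open>A pair \<open>(i\<^sub>0, [i\<^sub>1, \<dots>, i\<^sub>k])\<close> encodes the word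
  \<open>B\<^bsup>i\<^sub>0\<^esup> A B\<^bsup>i\<^sub>1\<^esup> \<cdots> A B\<^bsup>i\<^sub>k\<^esup>\<close>, which has
  degree \<open>i\<^sub>0 + \<cdots> + i\<^sub>k + k\<close>; the \<open>S\<^sub>k\<close> and \<open>T\<^sub>k\<close> are sums of such words.\<close>

definition word :: "'a::lin_rad_idem_semifield^'n::finite^'n \<Rightarrow> 'a^'n^'n \<Rightarrow> nat \<times> nat list \<Rightarrow> 'a^'n^'n" where
  "word A B w = mpow B (fst w) ** mprod (map (\<lambda>i. A ** mpow B i) (snd w))"

definition words_of_degree :: "nat \<Rightarrow> (nat \<times> nat list) set" where
  "words_of_degree m = {w. fst w + sum_list (snd w) + length (snd w) = m}"

lemma finite_Tmat_index: "finite {(i0::nat, xs::nat list). length xs = k \<and> i0 + sum_list xs \<le> N}"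
proof (rule finite_subset)
  show "{(i0, xs). length xs = k \<and> i0 + sum_list xs \<le> N} \<subseteq> {..N} \<times> {xs. set xs \<subseteq> {..N} \<and> length xs \<le> k}"
    using member_le_sum_list[where 'a=nat] by (force intro: order_trans)
  show "finite ({..N} \<times> {xs::nat list. set xs \<subseteq> {..N} \<and> length xs \<le> k})"
    by (simp add: finite_lists_length_le)
qed

lemma finite_Smat_index: "finite {xs::nat list. length xs = k \<and> sum_list xs \<le> N}"
proof (rule finite_subset)
  show "{xs. length xs = k \<and> sum_list xs \<le> N} \<subseteq> {xs. set xs \<subseteq> {..N} \<and> length xs \<le> k}"
    using member_le_sum_list[where 'a=nat] by (force intro: order_trans)
qed (simp add: finite_lists_length_le)

lemma finite_words_of_degree: "finite (words_of_degree m)"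
proof (rule finite_subset)
  show "words_of_degree m \<subseteq> (\<Union>k\<le>m. {(i0, xs). length xs = k \<and> i0 + sum_list xs \<le> m})"
    by (auto simp: words_of_degree_def)
qed (simp add: finite_Tmat_index)

lemma word_Nil: "word A B (i0, []) = mpow B i0"
  by (simp add: word_def)

lemma mpow_plus_le_sum_words: "mpow (A + B) m \<le> sum (word A B) (words_of_degree m)"
proof (induction m)
  case 0
  have "(0, []) \<in> words_of_degree 0"
    by (simp add: words_of_degree_def)
  then show ?case
    using sum_ge_member[OF finite_words_of_degree, of "(0, [])" 0 "word A B"] by (simp add: word_Nil)
next
  case (Suc m)
  have "mpow (A + B) (Suc m) \<le> (A + B) ** sum (word A B) (words_of_degree m)"
    using Suc by (simp add: matrix_mult_mono)
  also have "\<dots> = (\<Sum>w\<in>words_of_degree m. (A + B) ** word A B w)"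
    by (simp add: matrix_mult_sum_right finite_words_of_degree)
  also have "\<dots> \<le> sum (word A B) (words_of_degree (Suc m))"
  proof (rule sum_le_iff[OF finite_words_of_degree, THEN iffD2], intro ballI)
    fix w
    assume "w \<in> words_of_degree m"
    moreover obtain i0 xs where w: "w = (i0, xs)"
      by fastforce
    ultimately have "(0, i0 # xs) \<in> words_of_degree (Suc m)" "(Suc i0, xs) \<in> words_of_degree (Suc m)"
      by (simp_all add: words_of_degree_def)
    then have "word A B (0, i0 # xs) + word A B (Suc i0, xs) \<le> sum (word A B) (words_of_degree (Suc m))"
      by (auto intro: sum_ge_member[OF finite_words_of_degree])
    moreover have "(A + B) ** word A B w = word A B (0, i0 # xs) + word A B (Suc i0, xs)"
      by (simp add: w word_def matrix_add_rdistrib matrix_mul_assoc)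
    ultimately show "(A + B) ** word A B w \<le> sum (word A B) (words_of_degree (Suc m))"
      by simp
  qed
  finally show ?case .
qed

lemma linear_form_mpow_plus_le:
  assumes "\<And>w. w \<in> words_of_degree m \<Longrightarrow> linear_form v (word X Y w) \<le> z"
  shows "linear_form v (mpow (X + Y) m) \<le> z"
proof -
  have "linear_form v (mpow (X + Y) m) \<le> linear_form v (sum (word X Y) (words_of_degree m))"
    by (rule linear_form_mono) (rule mpow_plus_le_sum_words)
  also have "\<dots> \<le> z"
    using assms by (simp add: linear_form_sum finite_words_of_degree sum_le_iff)
  finally show ?thesis .
qed

lemma mprod_le_mpow:
  fixes X Y M :: "'a::lin_rad_idem_semifield^'n::finite^'n"
  assumes "X \<le> M" and "Y \<le> M"
  shows "mprod (map (\<lambda>i. X ** mpow Y i) xs) \<le> mpow M (sum_list xs + length xs)"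
proof (induction xs)
  case (Cons i xs)
  have "mprod (map (\<lambda>i. X ** mpow Y i) (i # xs)) \<le> (M ** mpow M i) ** mpow M (sum_list xs + length xs)"
    using assms Cons by (simp add: matrix_mult_mono mpow_mono)
  also have "\<dots> = mpow M (Suc (i + (sum_list xs + length xs)))"
    by (simp only: mpow.simps mpow_add matrix_mul_assoc)
  also have "\<dots> = mpow M (sum_list (i # xs) + length (i # xs))"
    by (simp add: add.assoc)
  finally show ?case .
qed simp

lemma word_le_mpow:
  fixes X Y M :: "'a::lin_rad_idem_semifield^'n::finite^'n"
  assumes "X \<le> M" and "Y \<le> M"
  shows "word X Y w \<le> mpow M (fst w + sum_list (snd w) + length (snd w))"
proof -
  have "word X Y w \<le> mpow M (fst w) ** mpow M (sum_list (snd w) + length (snd w))"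
    unfolding word_def using assms by (intro matrix_mult_mono mpow_mono mprod_le_mpow)
  then show ?thesis
    by (simp add: mpow_add add.assoc)
qed

lemma word_smat: "word (smat c A) B w = smat (c ^ length (snd w)) (word A B w)"
proof -
  have "mprod (map (\<lambda>i. smat c A ** mpow B i) xs)
      = smat (c ^ length xs) (mprod (map (\<lambda>i. A ** mpow B i) xs))" for xs
    by (induction xs) (simp_all add: smat_1 smat_matrix_mult_left smat_matrix_mult_right smat_smat mult.commute)
  then show ?thesis
    by (simp add: word_def smat_matrix_mult_right)
qed

lemma linear_form_word_smat:
  "linear_form v (word (smat c A) B w) = c ^ length (snd w) * linear_form v (word A B w)"
  by (simp add: word_smat linear_form_smat)

lemma tr_word_rotate:
  "tr (word A B (i0, xs @ [l])) = tr (mprod (map (\<lambda>i. A ** mpow B i) (xs @ [l + i0])))"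
proof -
  have "tr (word A B (i0, xs @ [l])) = tr (mprod (map (\<lambda>i. A ** mpow B i) (xs @ [l])) ** mpow B i0)"
    unfolding word_def fst_conv snd_conv by (rule tr_matrix_mult_commute)
  also have "\<dots> = tr (mprod (map (\<lambda>i. A ** mpow B i) (xs @ [l + i0])))"
    by (simp add: mprod_append mpow_add matrix_mul_assoc)
  finally show ?thesis .
qed

lemma mprod_replicate_0: "mprod (map (\<lambda>i. A ** mpow B i) (replicate k 0)) = mpow A k"
  by (induction k) simp_all

lemma Tmat_eq_sum_words:
  "0 < k \<Longrightarrow> Tmat A B k = sum (word A B) {(i0, xs). length xs = k \<and> i0 + sum_list xs \<le> CARD('n) - k - 1}"
  for A B :: "'a::lin_rad_idem_semifield^'n::finite^'n"
  unfolding Tmat_def word_def by (simp add: case_prod_beta')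

lemma inverse_power_mult_le_iff:
  "(\<mu>::'a::lin_rad_idem_semifield) \<noteq> 0 \<Longrightarrow> inverse \<mu> ^ k * t \<le> z \<longleftrightarrow> t \<le> \<mu> ^ k * z"
  using inverse_mult_le_iff[of "\<mu> ^ k" t z] by (simp add: inverse_power_sf)

section \<open>The optimal value\<close>

lemma tr_Smat_le_if_Trc_le_one:
  fixes A B :: "'a::lin_rad_idem_semifield^'n::finite^'n"
  assumes "\<mu> \<noteq> 0" and "Trc (smat (inverse \<mu>) A + B) \<le> 1"
    and "1 \<le> k" "k \<le> CARD('n)"
  shows "tr (Smat A B k) \<le> \<mu> ^ k"
proof -
  have "tr (mprod (map (\<lambda>i. A ** mpow B i) xs)) \<le> \<mu> ^ k"
    if xs: "length xs = k" "sum_list xs \<le> CARD('n) - k" for xs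
  proof -
    have "inverse \<mu> ^ k * tr (mprod (map (\<lambda>i. A ** mpow B i) xs))
        = tr (word (smat (inverse \<mu>) A) B (0, xs))"
      using xs unfolding tr_eq_linear_form linear_form_word_smat by (simp add: word_def)
    also have "\<dots> \<le> tr (mpow (smat (inverse \<mu>) A + B) (0 + sum_list xs + length xs))"
      using word_le_mpow[of "smat (inverse \<mu>) A" "smat (inverse \<mu>) A + B" B "(0, xs)"]
      by (intro tr_mono) (simp add: add_ge1 add_ge2)
    also have "\<dots> \<le> Trc (smat (inverse \<mu>) A + B)"
      using xs \<open>1 \<le> k\<close> \<open>k \<le> CARD('n)\<close> by (intro tr_mpow_le_Trc) simp_all
    also have "\<dots> \<le> 1"
      by (fact assms(2))
    finally show ?thesis
      using inverse_power_mult_le_iff[OF assms(1)] by simp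
  qed
  then show ?thesis
    unfolding Smat_def by (simp add: tr_sum finite_Smat_index sum_le_iff)
qed

text \<open>Conversely, every word of degree \<open>m \<le> n\<close> with \<open>k \<ge> 1\<close> letters \<open>A\<close> is, up to
  rotation, one of the summands of \<open>S\<^sub>k\<close>, and words without \<open>A\<close> are controlled
  by \<open>Tr(B) \<le> 1\<close>.\<close>

lemma tr_word_le_tr_Smat:
  fixes A B :: "'a::lin_rad_idem_semifield^'n::finite^'n"
  assumes "w \<in> words_of_degree m" and "m \<le> CARD('n)" and "snd w \<noteq> []"
  shows "tr (word A B w) \<le> tr (Smat A B (length (snd w)))"
proof -
  obtain i0 ys l where w: "w = (i0, ys @ [l])"
    using assms(3) by (cases w; cases "snd w" rule: rev_exhaust) auto
  with assms(1) have deg: "i0 + sum_list ys + l + length ys + 1 = m"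
    by (simp add: words_of_degree_def)
  have "tr (word A B w) = tr (mprod (map (\<lambda>i. A ** mpow B i) (ys @ [l + i0])))"
    by (simp add: w tr_word_rotate)
  also have "\<dots> \<le> tr (Smat A B (length (snd w)))"
    unfolding Smat_def
    by (rule tr_mono, rule sum_ge_member[OF finite_Smat_index]) (use deg assms(2) in \<open>simp add: w\<close>)
  finally show ?thesis .
qed

lemma Trc_le_one_if_tr_Smat_le:
  fixes A B :: "'a::lin_rad_idem_semifield^'n::finite^'n"
  assumes "\<mu> \<noteq> 0" and "Trc B \<le> 1"
    and S: "\<forall>k\<in>{1..CARD('n)}. tr (Smat A B k) \<le> \<mu> ^ k"
  shows "Trc (smat (inverse \<mu>) A + B) \<le> 1"
proof -
  have "tr (word (smat (inverse \<mu>) A) B w) \<le> 1"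
    if w: "w \<in> words_of_degree m" and m: "m \<in> {1..CARD('n)}" for w m
  proof (cases "snd w = []")
    case True
    with w have "word (smat (inverse \<mu>) A) B w = mpow B m"
      by (cases w) (simp add: words_of_degree_def word_Nil)
    then show ?thesis
      using tr_mpow_le_Trc[of m B] m assms(2) by simp
  next
    case False
    with w m have "length (snd w) \<in> {1..CARD('n)}"
      by (cases w) (auto simp: words_of_degree_def Suc_le_eq)
    then have "tr (word A B w) \<le> \<mu> ^ length (snd w) * 1"
      using tr_word_le_tr_Smat[of w m A B] w m False S by (auto intro: order_trans)
    then show ?thesis
      unfolding tr_eq_linear_form linear_form_word_smat
      by (simp add: inverse_power_mult_le_iff[OF assms(1)] flip: tr_eq_linear_form)
  qed
  then have "tr (mpow (smat (inverse \<mu>) A + B) m) \<le> 1" if "m \<in> {1..CARD('n)}" for m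
    using that unfolding tr_eq_linear_form by (blast intro: linear_form_mpow_plus_le)
  then show ?thesis
    by (simp add: Trc_def sum_le_iff)
qed

lemma Trc_le_one_iff_tr_Smat_le:
  fixes A B :: "'a::lin_rad_idem_semifield^'n::finite^'n"
  assumes "\<mu> \<noteq> 0" and "Trc B \<le> 1"
  shows "Trc (smat (inverse \<mu>) A + B) \<le> 1 \<longleftrightarrow> (\<forall>k\<in>{1..CARD('n)}. tr (Smat A B k) \<le> \<mu> ^ k)"
  using tr_Smat_le_if_Trc_le_one[OF assms(1)] Trc_le_one_if_tr_Smat_le[OF assms] by auto

lemma linear_form_Tmat_le_if_kstar_le:
  fixes A B :: "'a::lin_rad_idem_semifield^'n::finite^'n"
  assumes "\<mu> \<noteq> 0" and kstar_le: "linear_form v (kstar (smat (inverse \<mu>) A + B)) \<le> \<mu> * \<mu>"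
    and "k < CARD('n)"
  shows "linear_form v (Tmat A B k) \<le> \<mu> ^ (k + 2)"
proof (cases "k = 0")
  case True
  have "linear_form v (Tmat A B k) \<le> linear_form v (kstar (smat (inverse \<mu>) A + B))"
    using True by (simp add: Tmat_def linear_form_mono kstar_mono add_ge2)
  then show ?thesis
    using True kstar_le by (simp add: power2_eq_square)
next
  case False
  have "linear_form v (word A B w) \<le> \<mu> ^ (k + 2)"
    if "w \<in> {(i0, xs). length xs = k \<and> i0 + sum_list xs \<le> CARD('n) - k - 1}" for w
  proof -
    obtain i0 xs where w: "w = (i0, xs)"
      by fastforce
    with that have xs: "length xs = k" "i0 + sum_list xs \<le> CARD('n) - k - 1"
      by simp_all
    have "inverse \<mu> ^ k * linear_form v (word A B w) = linear_form v (word (smat (inverse \<mu>) A) B w)"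
      by (simp add: linear_form_word_smat w xs)
    also have "\<dots> \<le> linear_form v (mpow (smat (inverse \<mu>) A + B) (i0 + sum_list xs + length xs))"
      using word_le_mpow[of "smat (inverse \<mu>) A" "smat (inverse \<mu>) A + B" B w]
      by (intro linear_form_mono) (simp add: w add_ge1 add_ge2)
    also have "\<dots> \<le> linear_form v (kstar (smat (inverse \<mu>) A + B))"
      using xs \<open>k < CARD('n)\<close> False by (intro linear_form_mono mpow_le_kstar_less) simp
    also have "\<dots> \<le> \<mu> * \<mu>"
      by (fact kstar_le)
    finally have "linear_form v (word A B w) \<le> \<mu> ^ k * (\<mu> * \<mu>)"
      using inverse_power_mult_le_iff[OF assms(1)] by blast
    then show ?thesis
      by (simp add: power_add power2_eq_square mult_ac)
  qed
  then show ?thesis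
    using False by (simp add: Tmat_eq_sum_words linear_form_sum finite_Tmat_index sum_le_iff)
qed

lemma linear_form_word_le_Tmat:
  fixes A B :: "'a::lin_rad_idem_semifield^'n::finite^'n"
  assumes "w \<in> words_of_degree m" and "m < CARD('n)"
  shows "linear_form v (word A B w) \<le> linear_form v (Tmat A B (length (snd w)))"
proof -
  obtain i0 xs where w: "w = (i0, xs)"
    by fastforce
  with assms(1) have deg: "i0 + sum_list xs + length xs = m"
    by (simp add: words_of_degree_def)
  show ?thesis
  proof (cases "xs = []")
    case True
    then show ?thesis
      using deg assms(2) by (simp add: w word_Nil Tmat_def linear_form_mono mpow_le_kstar_less)
  next
    case False
    then have "0 < length xs"
      by simp
    show ?thesis
      unfolding w snd_conv Tmat_eq_sum_words[OF \<open>0 < length xs\<close>]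
      by (rule linear_form_mono, rule sum_ge_member[OF finite_Tmat_index])
        (use deg assms(2) False in auto)
  qed
qed

lemma linear_form_kstar_le_if_Tmat_le:
  fixes A B :: "'a::lin_rad_idem_semifield^'n::finite^'n"
  assumes "\<mu> \<noteq> 0" and T: "\<forall>k<CARD('n). linear_form v (Tmat A B k) \<le> \<mu> ^ (k + 2)"
  shows "linear_form v (kstar (smat (inverse \<mu>) A + B)) \<le> \<mu> * \<mu>"
proof -
  have "linear_form v (word (smat (inverse \<mu>) A) B w) \<le> \<mu> * \<mu>"
    if w: "w \<in> words_of_degree m" and m: "m < CARD('n)" for w m
  proof -
    have "length (snd w) < CARD('n)"
      using w m by (auto simp: words_of_degree_def)
    then have "linear_form v (word A B w) \<le> \<mu> ^ length (snd w) * (\<mu> * \<mu>)"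
      using linear_form_word_le_Tmat[OF w m, of v] T
      by (auto simp: power_add power2_eq_square mult_ac intro: order_trans)
    then show ?thesis
      by (simp add: linear_form_word_smat inverse_power_mult_le_iff[OF assms(1)])
  qed
  then have "linear_form v (mpow (smat (inverse \<mu>) A + B) m) \<le> \<mu> * \<mu>" if "m < CARD('n)" for m
    using that by (blast intro: linear_form_mpow_plus_le)
  then show ?thesis
    by (simp add: kstar_def linear_form_sum sum_le_iff)
qed

lemma linear_form_kstar_le_iff:
  fixes A B :: "'a::lin_rad_idem_semifield^'n::finite^'n"
  assumes "\<mu> \<noteq> 0"
  shows "linear_form v (kstar (smat (inverse \<mu>) A + B)) \<le> \<mu> * \<mu>
    \<longleftrightarrow> (\<forall>k<CARD('n). linear_form v (Tmat A B k) \<le> \<mu> ^ (k + 2))"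
  using linear_form_Tmat_le_if_kstar_le[OF assms] linear_form_kstar_le_if_Tmat_le[OF assms] by blast

definition opt_value ::
  "'a::lin_rad_idem_semifield^'n::finite^'n \<Rightarrow> 'a^'n^'n \<Rightarrow> 'a^'n \<Rightarrow> 'a^'n \<Rightarrow> 'a \<Rightarrow> 'a" where
  "opt_value A B p q r =
     (\<Sum>k\<in>{1..CARD('n)}. iroot k (tr (Smat A B k)))
     + (\<Sum>k\<in>{0..<CARD('n)}. iroot (k + 2) (vdot (vinv q) (Tmat A B k *v p)))
     + r"

lemma opt_value_le_iff:
  fixes A B :: "'a::lin_rad_idem_semifield^'n::finite^'n"
  assumes "\<mu> \<noteq> 0" and "Trc B \<le> 1"
  shows "opt_value A B p q r \<le> \<mu> \<longleftrightarrow>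
    Trc (smat (inverse \<mu>) A + B) \<le> 1
    \<and> vdot (vinv q) (kstar (smat (inverse \<mu>) A + B) *v p) \<le> \<mu> * \<mu>
    \<and> r \<le> \<mu>"
  unfolding opt_value_def vdot_matrix_vector_mult_eq_linear_form
    Trc_le_one_iff_tr_Smat_le[OF assms] linear_form_kstar_le_iff[OF assms(1)]
  by (auto simp: sum_le_iff iroot_le_iff)

lemma vdot_le_iff: "vdot u y \<le> z \<longleftrightarrow> (\<forall>i. u$i * y$i \<le> z)"
  by (simp add: vdot_def sum_le_iff)

lemma vdot_mono: "y \<le> y' \<Longrightarrow> vdot u y \<le> vdot u y'"
  unfolding vdot_def less_eq_vec_def by (auto intro!: sum_mono mult_left_mono)

lemma vdot_smult: "vdot u (c *s y) = c * vdot u y"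
  by (simp add: vdot_def vector_scalar_mult_def sum_distrib_left mult_ac)

lemma vdot_matrix_vector_mult: "vdot v (C *v u) = vdot (v v* C) u"
  unfolding vdot_def matrix_vector_mult_def vector_matrix_mult_def
  by (simp add: sum_distrib_left sum_distrib_right mult.assoc) (rule sum.swap)

lemma vdot_vinv_le_iff:
  assumes "regular x" and "\<mu> \<noteq> 0"
  shows "vdot (vinv x) y \<le> \<mu> \<longleftrightarrow> inverse \<mu> *s y \<le> x"
proof -
  have "inverse (x$i) * y$i \<le> \<mu> \<longleftrightarrow> inverse \<mu> * y$i \<le> x$i" for i
    using assms inverse_mult_le_iff[of "x$i" "y$i" \<mu>] inverse_mult_le_iff[of \<mu> "y$i" "x$i"]
    by (simp add: regular_def mult.commute)
  then show ?thesis
    by (simp add: vdot_le_iff vinv_def less_eq_vec_def)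
qed

lemma le_smult_vinv_iff_vdot_le:
  assumes "regular w"
  shows "u \<le> \<mu> *s vinv w \<longleftrightarrow> vdot w u \<le> \<mu>"
proof -
  have "u$j \<le> \<mu> * inverse (w$j) \<longleftrightarrow> w$j * u$j \<le> \<mu>" for j
    using assms inverse_mult_le_iff[of "inverse (w$j)" "u$j" \<mu>]
    by (simp add: regular_def inverse_nonzero_sf inverse_inverse_sf mult.commute)
  then show ?thesis
    by (simp add: vdot_le_iff vinv_def less_eq_vec_def)
qed

lemma vdot_vinv_eq_0_iff:
  assumes "regular x"
  shows "vdot (vinv x) y = 0 \<longleftrightarrow> y = 0"
proof -
  have "vdot (vinv x) y = 0 \<longleftrightarrow> (\<forall>i. inverse (x$i) * y$i = 0)"
    using vdot_le_iff[of "vinv x" y 0] by (simp add: vinv_def)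
  then show ?thesis
    using assms by (simp add: regular_def inverse_nonzero_sf vec_eq_iff)
qed

lemma matrix_vector_mult_regular_eq_0_iff:
  fixes A :: "'a::lin_rad_idem_semifield^'n::finite^'m::finite"
  assumes "regular x"
  shows "A *v x = 0 \<longleftrightarrow> A = 0"
proof
  assume "A *v x = 0"
  have "A$i$j * x$j \<le> (A *v x)$i" for i j
    unfolding matrix_vector_mult_def by (simp, rule sum_ge_member) simp_all
  with \<open>A *v x = 0\<close> have "A$i$j * x$j = 0" for i j
    by (metis le_zero_eq zero_index)
  with assms show "A = 0"
    by (simp add: regular_def vec_eq_iff)
qed simp

lemma regular_if_ge:
  fixes u v :: "'a::canonically_ordered_monoid_add^'n::finite"
  assumes "regular u" and "u \<le> v"
  shows "regular v"
  unfolding regular_def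
proof
  fix i
  have "u$i \<le> v$i"
    using assms(2) by (simp add: less_eq_vec_def)
  with assms(1) show "v$i \<noteq> 0"
    by (auto simp: regular_def)
qed

lemma regular_vinv: "regular x \<Longrightarrow> regular (vinv x)"
  by (simp add: regular_def vinv_def inverse_nonzero_sf)

lemma regular_vinv_vector_matrix_mult:
  fixes C :: "'a::lin_rad_idem_semifield^'n::finite^'n"
  assumes "regular q" and "mat 1 \<le> C"
  shows "regular (vinv q v* C)"
proof (rule regular_if_ge[OF regular_vinv[OF assms(1)]])
  have "inverse (q$j) * 1 \<le> (vinv q v* C) $ j" for j
  proof -
    have "inverse (q$j) * 1 \<le> inverse (q$j) * C$j$j"
      using mat_one_le_diag[OF assms(2)] by (rule mult_left_mono) simp
    also have "\<dots> \<le> (vinv q v* C) $ j"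
      unfolding vector_matrix_mult_def vinv_def by (simp, rule sum_ge_member) simp_all
    finally show ?thesis .
  qed
  then show "vinv q \<le> vinv q v* C"
    by (simp add: less_eq_vec_def vinv_def)
qed

definition spectral_radius :: "'a::lin_rad_idem_semifield^'n::finite^'n \<Rightarrow> 'a" where
  "spectral_radius A = (\<Sum>k\<in>{1..CARD('n)}. iroot k (tr (mpow A k)))"

definition objective ::
  "'a::lin_rad_idem_semifield^'n::finite^'n \<Rightarrow> 'a^'n \<Rightarrow> 'a^'n \<Rightarrow> 'a \<Rightarrow> 'a^'n \<Rightarrow> 'a" where
  "objective A p q r x = vdot (vinv x) (A *v x) + vdot (vinv x) p + vdot (vinv q) x + r"

lemma objective_le_iff:
  assumes "regular x" and "\<mu> \<noteq> 0"
  shows "objective A p q r x \<le> \<mu> \<and> B *v x \<le> x \<longleftrightarrow>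
    (smat (inverse \<mu>) A + B) *v x \<le> x \<and> inverse \<mu> *s p \<le> x \<and> vdot (vinv q) x \<le> \<mu> \<and> r \<le> \<mu>"
  using assms
  by (auto simp: objective_def vdot_vinv_le_iff matrix_vector_mult_add_rdistrib smat_matrix_vector_mult)

lemma objective_nonzero:
  fixes A :: "'a::lin_rad_idem_semifield^'n::finite^'n"
  assumes "regular x" and "0 < spectral_radius A + iroot 2 (vdot (vinv q) p) + r"
  shows "objective A p q r x \<noteq> 0"
proof
  assume "objective A p q r x = 0"
  then have "A = 0" "p = 0" "r = 0"
    using assms(1) by (simp_all add: objective_def vdot_vinv_eq_0_iff matrix_vector_mult_regular_eq_0_iff)
  moreover have "spectral_radius (0::'a^'n^'n) = 0"
  proof -
    have "iroot k (tr (mpow (0::'a^'n^'n) k)) = 0" if "k \<in> {1..CARD('n)}" for k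
      using that by (cases k) (simp_all add: tr_def iroot_0)
    then show ?thesis
      by (simp add: spectral_radius_def)
  qed
  ultimately show False
    using assms(2) by (simp add: iroot_0 vdot_def)
qed

lemma spectral_radius_le_opt_value:
  fixes A B :: "'a::lin_rad_idem_semifield^'n::finite^'n"
  shows "spectral_radius A + iroot 2 (vdot (vinv q) p) + r \<le> opt_value A B p q r"
proof -
  have "tr (mpow A k) \<le> tr (Smat A B k)" if "k \<le> CARD('n)" for k
    unfolding Smat_def mprod_replicate_0[symmetric, of A k B]
    by (rule tr_mono, rule sum_ge_member[OF finite_Smat_index]) (simp add: that sum_list_replicate)
  then have "spectral_radius A \<le> (\<Sum>k\<in>{1..CARD('n)}. iroot k (tr (Smat A B k)))"
    unfolding spectral_radius_def by (intro sum_mono iroot_mono) simp_all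
  moreover have "iroot 2 (vdot (vinv q) p) \<le> (\<Sum>k\<in>{0..<CARD('n)}. iroot (k + 2) (vdot (vinv q) (Tmat A B k *v p)))"
  proof -
    have "vdot (vinv q) p \<le> vdot (vinv q) (Tmat A B 0 *v p)"
      by (simp add: Tmat_def vdot_mono matrix_vector_mult_ge mat_one_le_kstar)
    then have "iroot 2 (vdot (vinv q) p) \<le> iroot (0 + 2) (vdot (vinv q) (Tmat A B 0 *v p))"
      unfolding add_0_left by (rule iroot_mono[rotated]) simp
    also have "\<dots> \<le> (\<Sum>k\<in>{0..<CARD('n)}. iroot (k + 2) (vdot (vinv q) (Tmat A B k *v p)))"
      by (rule sum_ge_member) simp_all
    finally show ?thesis .
  qed
  ultimately show ?thesis
    unfolding opt_value_def by (meson add_le_iff add_ge1 add_ge2 order_trans)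
qed

lemma opt_value_le_objective:
  fixes A B :: "'a::lin_rad_idem_semifield^'n::finite^'n"
  assumes "Trc B \<le> 1" and "regular x" and "B *v x \<le> x"
    and "objective A p q r x \<noteq> 0"
  shows "opt_value A B p q r \<le> objective A p q r x"
proof -
  define \<mu> where "\<mu> = objective A p q r x"
  define M where "M = smat (inverse \<mu>) A + B"
  have "\<mu> \<noteq> 0"
    using assms(4) by (simp add: \<mu>_def)
  have "objective A p q r x \<le> \<mu> \<and> B *v x \<le> x"
    using assms(3) by (simp add: \<mu>_def)
  then have "M *v x \<le> x \<and> inverse \<mu> *s p \<le> x \<and> vdot (vinv q) x \<le> \<mu> \<and> r \<le> \<mu>"
    unfolding objective_le_iff[OF assms(2) \<open>\<mu> \<noteq> 0\<close>] M_def .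
  then have sub: "M *v x \<le> x" and p: "inverse \<mu> *s p \<le> x" and q: "vdot (vinv q) x \<le> \<mu>"
    and r: "r \<le> \<mu>"
    by simp_all
  have "inverse \<mu> * vdot (vinv q) (kstar M *v p) = vdot (vinv q) (kstar M *v (inverse \<mu> *s p))"
    by (simp add: matrix_vector_mult_smult vdot_smult)
  also have "\<dots> \<le> vdot (vinv q) x"
    using kstar_matrix_vector_mult_le[OF sub p] by (rule vdot_mono)
  also have "\<dots> \<le> \<mu>"
    by (fact q)
  finally have "vdot (vinv q) (kstar M *v p) \<le> \<mu> * \<mu>"
    using inverse_mult_le_iff[OF \<open>\<mu> \<noteq> 0\<close>] by blast
  with Trc_le_one_if_regular_subeigenvector[OF assms(2) sub] r show ?thesis
    using opt_value_le_iff[OF \<open>\<mu> \<noteq> 0\<close> assms(1)] by (simp add: \<mu>_def M_def)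
qed

lemma sublevel_set_eq:
  fixes A B :: "'a::lin_rad_idem_semifield^'n::finite^'n"
  assumes "\<mu> \<noteq> 0" and Trc: "Trc (smat (inverse \<mu>) A + B) \<le> 1" and "r \<le> \<mu>"
    and "regular q" and "regular x"
  defines "C \<equiv> kstar (smat (inverse \<mu>) A + B)"
  shows "B *v x \<le> x \<and> objective A p q r x \<le> \<mu> \<longleftrightarrow>
    (\<exists>u. inverse \<mu> *s p \<le> u \<and> u \<le> \<mu> *s vinv (vinv q v* C) \<and> x = C *v u)"
proof -
  have box: "u \<le> \<mu> *s vinv (vinv q v* C) \<longleftrightarrow> vdot (vinv q) (C *v u) \<le> \<mu>" for u
    using le_smult_vinv_iff_vdot_le[OF regular_vinv_vector_matrix_mult[OF assms(4)]]
    by (simp add: C_def mat_one_le_kstar vdot_matrix_vector_mult)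
  have ge: "u \<le> C *v u" for u
    by (simp add: C_def matrix_vector_mult_ge mat_one_le_kstar)
  show ?thesis
  proof
    assume "B *v x \<le> x \<and> objective A p q r x \<le> \<mu>"
    then have "(smat (inverse \<mu>) A + B) *v x \<le> x \<and> inverse \<mu> *s p \<le> x \<and> vdot (vinv q) x \<le> \<mu>"
      using objective_le_iff[OF assms(5,1), of A p q r B] by blast
    then have sub: "(smat (inverse \<mu>) A + B) *v x \<le> x" and p: "inverse \<mu> *s p \<le> x"
      and q: "vdot (vinv q) x \<le> \<mu>"
      by simp_all
    have "x = C *v x"
      unfolding C_def using kstar_matrix_vector_mult_eq[OF sub] by simp
    with p q box[of x] show "\<exists>u. inverse \<mu> *s p \<le> u \<and> u \<le> \<mu> *s vinv (vinv q v* C) \<and> x = C *v u"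
      by auto
  next
    assume "\<exists>u. inverse \<mu> *s p \<le> u \<and> u \<le> \<mu> *s vinv (vinv q v* C) \<and> x = C *v u"
    then obtain u where p: "inverse \<mu> *s p \<le> u" and q: "u \<le> \<mu> *s vinv (vinv q v* C)"
      and x: "x = C *v u"
      by blast
    have "(smat (inverse \<mu>) A + B) *v x \<le> x"
      unfolding x C_def by (rule kstar_subeigenvector[OF Trc])
    moreover have "inverse \<mu> *s p \<le> x"
      using order_trans[OF p ge] by (simp add: x)
    moreover have "vdot (vinv q) x \<le> \<mu>"
      using q box by (simp add: x)
    ultimately show "B *v x \<le> x \<and> objective A p q r x \<le> \<mu>"
      using objective_le_iff[OF assms(5,1), of A p q r B] \<open>r \<le> \<mu>\<close> by blast
  qed
qed

lemma sublevel_set_nonempty: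
  fixes A B :: "'a::lin_rad_idem_semifield^'n::finite^'n"
  assumes "\<mu> \<noteq> 0" and "Trc (smat (inverse \<mu>) A + B) \<le> 1" and "r \<le> \<mu>" and "regular q"
    and pq: "vdot (vinv q) (kstar (smat (inverse \<mu>) A + B) *v p) \<le> \<mu> * \<mu>"
  shows "\<exists>x. regular x \<and> B *v x \<le> x \<and> objective A p q r x \<le> \<mu>"
proof -
  define C where "C = kstar (smat (inverse \<mu>) A + B)"
  define w where "w = vinv q v* C"
  define u where "u = \<mu> *s vinv w"
  have "regular w"
    unfolding w_def C_def using assms(4) mat_one_le_kstar by (rule regular_vinv_vector_matrix_mult)
  have "inverse \<mu> *s p \<le> u"
  proof -
    have "vdot w (inverse \<mu> *s p) = inverse \<mu> * vdot (vinv q) (C *v p)"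
      by (simp add: w_def vdot_smult vdot_matrix_vector_mult)
    also have "\<dots> \<le> \<mu>"
      using pq inverse_mult_le_iff[OF assms(1)] by (simp add: C_def)
    finally show ?thesis
      unfolding u_def using le_smult_vinv_iff_vdot_le[OF \<open>regular w\<close>] by blast
  qed
  moreover have "regular (C *v u)"
  proof (rule regular_if_ge)
    show "regular u"
      using \<open>regular w\<close> assms(1) by (simp add: u_def regular_def vinv_def inverse_nonzero_sf)
    show "u \<le> C *v u"
      by (simp add: C_def matrix_vector_mult_ge mat_one_le_kstar)
  qed
  ultimately show ?thesis
    using sublevel_set_eq[OF assms(1-4) \<open>regular (C *v u)\<close>] by (auto simp: C_def w_def u_def)
qed

theorem corollary2:
  fixes A B :: "'a::lin_rad_idem_semifield ^ 'n::finite ^ 'n"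
    and p q :: "'a ^ 'n"
    and r lam :: 'a
  assumes lam: "lam = (\<Sum>k\<in>{1..CARD('n)}. iroot k (tr (mpow A k)))"
    and TrB: "Trc B \<le> 1"
    and qreg: "regular q"
    and pos: "0 < lam + iroot 2 (vdot (vinv q) p) + r"
  shows "let F = (\<lambda>x. vdot (vinv x) (A *v x) + vdot (vinv x) p + vdot (vinv q) x + r);
             \<theta> = (\<Sum>k\<in>{1..CARD('n)}. iroot k (tr (Smat A B k)))
                 + (\<Sum>k\<in>{0..<CARD('n)}. iroot (k + 2) (vdot (vinv q) (Tmat A B k *v p)))
                 + r;
             C = kstar (smat (inverse \<theta>) A + B)
         in (\<exists>x. regular x \<and> B *v x \<le> x \<and> F x = \<theta>)
          \<and> (\<forall>x. regular x \<and> B *v x \<le> x \<longrightarrow> \<theta> \<le> F x)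
          \<and> (\<forall>x. regular x \<longrightarrow>
               ((B *v x \<le> x \<and> F x = \<theta>) \<longleftrightarrow>
                (\<exists>u. inverse \<theta> *s p \<le> u \<and> u \<le> \<theta> *s vinv (vinv q v* C) \<and> x = C *v u)))"
proof -
  define \<theta> where "\<theta> = opt_value A B p q r"
  define C where "C = kstar (smat (inverse \<theta>) A + B)"
  have pos': "0 < spectral_radius A + iroot 2 (vdot (vinv q) p) + r"
    using pos by (simp add: lam spectral_radius_def)
  then have "\<theta> \<noteq> 0"
    using spectral_radius_le_opt_value[of A q p r B] by (auto simp: \<theta>_def)
  have "Trc (smat (inverse \<theta>) A + B) \<le> 1 \<and> vdot (vinv q) (C *v p) \<le> \<theta> * \<theta> \<and> r \<le> \<theta>"
    using opt_value_le_iff[OF \<open>\<theta> \<noteq> 0\<close> TrB, of A p q r] by (simp add: \<theta>_def C_def)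
  then have \<theta>: "Trc (smat (inverse \<theta>) A + B) \<le> 1" "vdot (vinv q) (C *v p) \<le> \<theta> * \<theta>" "r \<le> \<theta>"
    by simp_all
  have lower: "\<theta> \<le> objective A p q r x" if "regular x" "B *v x \<le> x" for x
    using opt_value_le_objective[OF TrB that objective_nonzero[OF that(1) pos']] by (simp add: \<theta>_def)
  have "\<exists>x. regular x \<and> B *v x \<le> x \<and> objective A p q r x = \<theta>"
    using sublevel_set_nonempty[OF \<open>\<theta> \<noteq> 0\<close> \<theta>(1,3) qreg] \<theta>(2) lower
    by (fastforce simp: C_def intro: order.antisym)
  moreover have "(B *v x \<le> x \<and> objective A p q r x = \<theta>) \<longleftrightarrow>
      (\<exists>u. inverse \<theta> *s p \<le> u \<and> u \<le> \<theta> *s vinv (vinv q v* C) \<and> x = C *v u)" if "regular x" for x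
    using sublevel_set_eq[OF \<open>\<theta> \<noteq> 0\<close> \<theta>(1,3) qreg that] lower[OF that]
    by (auto simp: C_def intro: order.antisym)
  ultimately show ?thesis
    using lower unfolding Let_def objective_def \<theta>_def opt_value_def C_def by blast
qed

end
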